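(* Let $\mathcal A$ be a linear time-invariant algorithm with $n$ oracles and realization $(A,B,C,D)$, let $\kappa\subseteq[n]$ with $\bar\kappa=[n]\setminus\kappa$ and $D[\kappa]$ invertible. If $\mathcal A$ converges to a fixed point $(y[\kappa]^\star,y[\bar\kappa]^\star,u[\kappa]^\star,u[\bar\kappa]^\star,x^\star)$, then its conjugate $\mathcal B=\mathcal C_\kappa\mathcal A$ converges to the fixed point $(u[\kappa]^\star,y[\bar\kappa]^\star,y[\kappa]^\star,u[\bar\kappa]^\star,x^\star)$.
   Context: $\mathcal A$ generates $x^{k+1}=Ax^k+Bu^k$, $y^k=Cx^k+Du^k$, $u^k=\phi(y^k)$, where the oracles are (sub)gradients $\partial f_i$, $i\in[n]$; $y[\kappa],u[\kappa]$ denote the components of oracle arguments/outputs belonging to oracles in $\kappa$, and $D[\kappa]$ the corresponding diagonal block of $D$. A fixed point is a tuple of oracle arguments, oracle outputs and state satisfying $x^\star=Ax^\star+Bu^\star$, $y^\star=Cx^\star+Du^\star$, $u^\star=\phi(y^\star)$ (listed as arguments, then outputs, then state). The conjugation $\mathcal C_\kappa\mathcal A$ rewrites $\mathcal A$ to call $\partial f_i^\star=(\partial f_i)^{-1}$ instead of $\partial f_i$ for $i\in\kappa$, so that for these oracles the argument and output are swapped (the new oracle argument is the old output and vice versa); its realization is obtained by solving the $\kappa$-rows of $y=Cx+Du$ for $u[\kappa]$. *)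

theory Defs
  imports "HOL-Analysis.Analysis"
begin

text \<open>Oracle arguments/outputs of all n oracles are collected in a vector of type
 'v^'n (oracle index type 'n, finite, playing the role of [n]); the state lives in 'x.
 The realization (A,B,C,D) is given by linear maps.\<close>

definition subdiff :: "('v::real_inner \<Rightarrow> real) \<Rightarrow> 'v \<Rightarrow> 'v set" where
  "subdiff f y = {g. \<forall>z. f z \<ge> f y + inner g (z - y)}"

definition subdiff_inv :: "('v::real_inner \<Rightarrow> real) \<Rightarrow> 'v \<Rightarrow> 'v set" where
  "subdiff_inv f a = {b. a \<in> subdiff f b}"

definition proj :: "'n set \<Rightarrow> ('v::zero)^'n \<Rightarrow> 'v^'n" where
  "proj \<kappa> z = (\<chi> i. if i \<in> \<kappa> then z $ i else 0)"

text \<open>The diagonal block D[kappa], as a map on vectors supported on kappa.\<close>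
definition Dblock :: "(('v::real_vector)^'n \<Rightarrow> 'v^'n) \<Rightarrow> 'n set \<Rightarrow> 'v^'n \<Rightarrow> 'v^'n" where
  "Dblock D \<kappa> w = proj \<kappa> (D (proj \<kappa> w))"

definition Dblock_invertible :: "(('v::real_vector)^'n \<Rightarrow> 'v^'n) \<Rightarrow> 'n set \<Rightarrow> bool" where
  "Dblock_invertible D \<kappa> \<longleftrightarrow> bij_betw (Dblock D \<kappa>) (range (proj \<kappa>)) (range (proj \<kappa>))"

definition Dinv :: "(('v::real_vector)^'n \<Rightarrow> 'v^'n) \<Rightarrow> 'n set \<Rightarrow> 'v^'n \<Rightarrow> 'v^'n" where
  "Dinv D \<kappa> z = inv_into (range (proj \<kappa>)) (Dblock D \<kappa>) (proj \<kappa> z)"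

text \<open>Realization of the conjugate C_kappa A, obtained by solving the kappa-rows of
  y = C x + D u for u[kappa]:
  u[kappa] = D[kappa]^{-1} (u'[kappa] - C[kappa] x - D[kappa,kbar] u'[kbar]),
  where u' = (y[kappa], u[kbar]) is the new oracle output and y' = (u[kappa], y[kbar]) the new argument.\<close>
definition conjA :: "('x \<Rightarrow> 'x::real_vector) \<Rightarrow> (('v::real_vector)^'n \<Rightarrow> 'x) \<Rightarrow> ('x \<Rightarrow> 'v^'n)
    \<Rightarrow> ('v^'n \<Rightarrow> 'v^'n) \<Rightarrow> 'n set \<Rightarrow> 'x \<Rightarrow> 'x" where
  "conjA A B C D \<kappa> x = A x - B (Dinv D \<kappa> (C x))"

definition conjB :: "(('v::real_vector)^'n \<Rightarrow> 'x::real_vector) \<Rightarrow> ('v^'n \<Rightarrow> 'v^'n) \<Rightarrow> 'n set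
    \<Rightarrow> 'v^'n \<Rightarrow> 'x" where
  "conjB B D \<kappa> w = B (Dinv D \<kappa> (w - D (proj (- \<kappa>) w)) + proj (- \<kappa>) w)"

definition conjC :: "('x::real_vector \<Rightarrow> ('v::real_vector)^'n) \<Rightarrow> ('v^'n \<Rightarrow> 'v^'n) \<Rightarrow> 'n set
    \<Rightarrow> 'x \<Rightarrow> 'v^'n" where
  "conjC C D \<kappa> x = - Dinv D \<kappa> (C x) + proj (- \<kappa>) (C x - D (Dinv D \<kappa> (C x)))"

definition conjD :: "(('v::real_vector)^'n \<Rightarrow> 'v^'n) \<Rightarrow> 'n set \<Rightarrow> 'v^'n \<Rightarrow> 'v^'n" where
  "conjD D \<kappa> w = Dinv D \<kappa> (w - D (proj (- \<kappa>) w))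
      + proj (- \<kappa>) (D (Dinv D \<kappa> (w - D (proj (- \<kappa>) w)) + proj (- \<kappa>) w))"

definition is_trajectory ::
  "('x::real_vector \<Rightarrow> 'x) \<Rightarrow> (('v::real_vector)^'n \<Rightarrow> 'x) \<Rightarrow> ('x \<Rightarrow> 'v^'n) \<Rightarrow> ('v^'n \<Rightarrow> 'v^'n)
   \<Rightarrow> ('n \<Rightarrow> 'v \<Rightarrow> 'v set) \<Rightarrow> 'x \<Rightarrow> (nat \<Rightarrow> 'v^'n) \<Rightarrow> (nat \<Rightarrow> 'v^'n) \<Rightarrow> (nat \<Rightarrow> 'x) \<Rightarrow> bool" where
    "is_trajectory A B C D \<Phi> x0 y u x \<longleftrightarrow>
     x 0 = x0 \<and>
     (\<forall>k. x (Suc k) = A (x k) + B (u k)) \<and>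
     (\<forall>k. y k = C (x k) + D (u k)) \<and>
     (\<forall>k i. u k $ i \<in> \<Phi> i (y k $ i))"

definition is_fixed_point ::
  "('x::real_vector \<Rightarrow> 'x) \<Rightarrow> (('v::real_vector)^'n \<Rightarrow> 'x) \<Rightarrow> ('x \<Rightarrow> 'v^'n) \<Rightarrow> ('v^'n \<Rightarrow> 'v^'n)
   \<Rightarrow> ('n \<Rightarrow> 'v \<Rightarrow> 'v set) \<Rightarrow> 'v^'n \<Rightarrow> 'v^'n \<Rightarrow> 'x \<Rightarrow> bool" where
  "is_fixed_point A B C D \<Phi> ys us xs \<longleftrightarrow>
     xs = A xs + B us \<and> ys = C xs + D us \<and> (\<forall>i. us $ i \<in> \<Phi> i (ys $ i))"

definition converges_to ::
  "('x::real_normed_vector \<Rightarrow> 'x) \<Rightarrow> (('v::real_normed_vector)^'n \<Rightarrow> 'x) \<Rightarrow> ('x \<Rightarrow> 'v^'n) \<Rightarrow> ('v^'n \<Rightarrow> 'v^'n)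
   \<Rightarrow> ('n \<Rightarrow> 'v \<Rightarrow> 'v set) \<Rightarrow> 'x \<Rightarrow> 'v^'n \<Rightarrow> 'v^'n \<Rightarrow> 'x \<Rightarrow> bool" where
  "converges_to A B C D \<Phi> x0 ys us xs \<longleftrightarrow>
     is_fixed_point A B C D \<Phi> ys us xs \<and>
     (\<forall>y u x. is_trajectory A B C D \<Phi> x0 y u x \<longrightarrow>
        y \<longlonglongrightarrow> ys \<and> u \<longlonglongrightarrow> us \<and> x \<longlonglongrightarrow> xs)"

definition oraclesA :: "('n \<Rightarrow> 'v::real_inner \<Rightarrow> real) \<Rightarrow> 'n \<Rightarrow> 'v \<Rightarrow> 'v set" where
  "oraclesA f i = subdiff (f i)"

definition oraclesConj :: "'n set \<Rightarrow> ('n \<Rightarrow> 'v::real_inner \<Rightarrow> real) \<Rightarrow> 'n \<Rightarrow> 'v \<Rightarrow> 'v set" where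
  "oraclesConj \<kappa> f i = (if i \<in> \<kappa> then subdiff_inv (f i) else subdiff (f i))"

end

theory Submission
  imports Defs
begin

text \<open>Conjugating the oracles in \<kappa> only swaps, for those oracles, the roles of argument and
  output: a sequence (y', u', x) is generated by the conjugate algorithm exactly when
  (y, u, x) is generated by the original one, where y and u take their \<kappa>-components from
  u' and y' respectively and keep the others. The realization (conjA, conjB, conjC, conjD)
  is built precisely so that its output equation is the original one with the \<kappa>-rows
  solved for u[\<kappa>], which is possible as D[\<kappa>] is invertible. Since this swap is an
  involution and continuous, fixed points correspond and convergence transfers.\<close>

lemma proj_nth [simp]: "proj \<kappa> z $ i = (if i \<in> \<kappa> then z $ i else 0)"
  by (simp add: proj_def)

lemma proj_add: "proj \<kappa> (a + b) = proj \<kappa> a + proj \<kappa> (b :: ('v::real_vector)^'n)"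
  and proj_diff: "proj \<kappa> (a - b) = proj \<kappa> a - proj \<kappa> (b :: ('v::real_vector)^'n)"
  and proj_minus: "proj \<kappa> (- a) = - proj \<kappa> (a :: ('v::real_vector)^'n)"
  and proj_proj: "proj \<kappa> (proj \<kappa> a) = proj \<kappa> a"
  and proj_proj_Compl: "proj \<kappa> (proj (- \<kappa>) a) = 0" "proj (- \<kappa>) (proj \<kappa> a) = 0"
  by (simp_all add: vec_eq_iff)

lemmas proj_simps = proj_add proj_diff proj_minus proj_proj proj_proj_Compl

lemma vec_eq_iff_proj: "a = b \<longleftrightarrow> proj \<kappa> a = proj \<kappa> b \<and> proj (- \<kappa>) a = proj (- \<kappa>) b"
  by (auto simp: vec_eq_iff)

lemma tendsto_proj:
  "X \<longlonglongrightarrow> L \<Longrightarrow> (\<lambda>k. proj \<kappa> (X k)) \<longlonglongrightarrow> proj \<kappa> (L :: ('v::real_normed_vector)^'n)"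
  unfolding proj_def by (intro tendsto_vec_lambda) (simp add: tendsto_vec_nth)

definition merge_on :: "'n set \<Rightarrow> ('v::real_vector)^'n \<Rightarrow> 'v^'n \<Rightarrow> 'v^'n" where
  "merge_on \<kappa> a b = proj \<kappa> a + proj (- \<kappa>) b"

lemma merge_on_nth [simp]: "merge_on \<kappa> a b $ i = (if i \<in> \<kappa> then a $ i else b $ i)"
  by (simp add: merge_on_def)

lemma proj_merge_on [simp]:
  "proj \<kappa> (merge_on \<kappa> a b) = proj \<kappa> a" "proj (- \<kappa>) (merge_on \<kappa> a b) = proj (- \<kappa>) b"
  by (simp_all add: vec_eq_iff)

lemma eq_merge_on_iff: "c = merge_on \<kappa> a b \<longleftrightarrow> proj \<kappa> c = proj \<kappa> a \<and> proj (- \<kappa>) c = proj (- \<kappa>) b"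
  using vec_eq_iff_proj[of c "merge_on \<kappa> a b" \<kappa>] by simp

lemma merge_on_swap [simp]: "merge_on \<kappa> (merge_on \<kappa> a b) (merge_on \<kappa> b a) = a"
  by (simp add: vec_eq_iff)

lemma tendsto_merge_on:
  "X \<longlonglongrightarrow> a \<Longrightarrow> Y \<longlonglongrightarrow> b
    \<Longrightarrow> (\<lambda>k. merge_on \<kappa> (X k) (Y k)) \<longlonglongrightarrow> merge_on \<kappa> a (b :: ('v::real_normed_vector)^'n)"
  unfolding merge_on_def by (intro tendsto_add tendsto_proj)

context
  fixes D :: "('v::real_vector)^'n \<Rightarrow> 'v^'n" and \<kappa> :: "'n set"
  assumes linear_D: "linear D" and invertible: "Dblock_invertible D \<kappa>"
begin

lemma proj_Dinv [simp]: "proj \<kappa> (Dinv D \<kappa> z) = Dinv D \<kappa> z"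
proof -
  have "bij_betw (inv_into (range (proj \<kappa>)) (Dblock D \<kappa>)) (range (proj \<kappa>)) (range (proj \<kappa>))"
    using invertible unfolding Dblock_invertible_def by (rule bij_betw_inv_into)
  then have "Dinv D \<kappa> z \<in> range (proj \<kappa>)"
    unfolding Dinv_def by (auto dest: bij_betwE)
  then show ?thesis by (auto simp: proj_proj)
qed

lemma proj_Compl_Dinv [simp]: "proj (- \<kappa>) (Dinv D \<kappa> z) = 0"
  by (metis proj_Dinv proj_proj_Compl(2))

lemma eq_Dinv_iff:
  assumes "proj \<kappa> w = w"
  shows "w = Dinv D \<kappa> z \<longleftrightarrow> Dblock D \<kappa> w = proj \<kappa> z"
proof -
  have bij: "bij_betw (Dblock D \<kappa>) (range (proj \<kappa>)) (range (proj \<kappa>))"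
    using invertible unfolding Dblock_invertible_def .
  have "w \<in> range (proj \<kappa>)" "proj \<kappa> z \<in> range (proj \<kappa>)"
    using assms by (metis rangeI)+
  then show ?thesis
    unfolding Dinv_def using bij
    by (metis bij_betw_imp_surj_on bij_betw_inv_into_left f_inv_into_f)
qed

lemma Dinv_diff: "Dinv D \<kappa> (a - b) = Dinv D \<kappa> a - Dinv D \<kappa> b"
proof -
  have "Dblock D \<kappa> (Dinv D \<kappa> c) = proj \<kappa> c" for c
    using eq_Dinv_iff[OF proj_Dinv] by blast
  then have "Dblock D \<kappa> (Dinv D \<kappa> a - Dinv D \<kappa> b) = proj \<kappa> (a - b)"
    by (simp add: Dblock_def proj_diff linear_diff[OF linear_D])
  moreover have "proj \<kappa> (Dinv D \<kappa> a - Dinv D \<kappa> b) = Dinv D \<kappa> a - Dinv D \<kappa> b"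
    by (simp add: proj_diff)
  ultimately show ?thesis
    using eq_Dinv_iff by metis
qed

text \<open>The original oracle output u, recovered from the state x and the conjugate output
  w = (y[\<kappa>], u[\<kappa>bar]) by solving the \<kappa>-rows of y = C x + D u for u[\<kappa>].\<close>

definition solved_output :: "('x \<Rightarrow> 'v^'n) \<Rightarrow> 'x \<Rightarrow> 'v^'n \<Rightarrow> 'v^'n" where
  "solved_output C x w = Dinv D \<kappa> (w - C x - D (proj (- \<kappa>) w)) + proj (- \<kappa>) w"

lemma solved_output_conv:
  "solved_output C x w = Dinv D \<kappa> (w - D (proj (- \<kappa>) w)) - Dinv D \<kappa> (C x) + proj (- \<kappa>) w"
  unfolding solved_output_def cancel_ab_semigroup_add_class.diff_right_commute[of w "C x"]
  by (simp only: Dinv_diff)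

lemma conjC_add_conjD:
  "conjC C D \<kappa> x + conjD D \<kappa> w = merge_on \<kappa> (solved_output C x w) (C x + D (solved_output C x w))"
proof -
  define a where "a = Dinv D \<kappa> (w - D (proj (- \<kappa>) w))"
  define c where "c = Dinv D \<kappa> (C x)"
  define s where "s = solved_output C x w"
  have conjC: "conjC C D \<kappa> x = - c + proj (- \<kappa>) (C x - D c)"
    by (simp add: conjC_def c_def)
  have conjD: "conjD D \<kappa> w = a + proj (- \<kappa>) (D (a + proj (- \<kappa>) w))"
    by (simp add: conjD_def a_def)
  have s: "s = a - c + proj (- \<kappa>) w"
    by (simp add: s_def solved_output_conv a_def c_def)
  have "a - c + proj (- \<kappa>) w = (a + proj (- \<kappa>) w) - c"
    by (simp add: algebra_simps)
  then have Ds: "D (a - c + proj (- \<kappa>) w) = D (a + proj (- \<kappa>) w) - D c"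
    by (metis linear_diff[OF linear_D])
  have "proj \<kappa> a = a" "proj \<kappa> c = c" "proj (- \<kappa>) a = 0" "proj (- \<kappa>) c = 0"
    by (simp_all add: a_def c_def)
  then have "proj \<kappa> (conjC C D \<kappa> x + conjD D \<kappa> w) = proj \<kappa> s"
    and "proj (- \<kappa>) (conjC C D \<kappa> x + conjD D \<kappa> w) = proj (- \<kappa>) (C x + D s)"
    unfolding conjC conjD s Ds by (simp_all add: proj_simps)
  then show ?thesis
    by (simp add: eq_merge_on_iff s_def)
qed

lemma conjA_add_conjB:
  assumes "linear B"
  shows "conjA A B C D \<kappa> x + conjB B D \<kappa> w = A x + B (solved_output C x w)"
  unfolding conjA_def conjB_def solved_output_conv
  by (simp add: linear_add[OF assms] linear_diff[OF assms] algebra_simps)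

lemma eq_solved_output_iff:
  "merge_on \<kappa> v w = solved_output C x w \<longleftrightarrow> proj \<kappa> w = proj \<kappa> (C x + D (merge_on \<kappa> v w))"
proof -
  let ?u = "merge_on \<kappa> v w" and ?z = "w - C x - D (proj (- \<kappa>) w)"
  have "D ?u = D (proj \<kappa> v) + D (proj (- \<kappa>) w)"
    unfolding merge_on_def by (rule linear_add[OF linear_D])
  then have kappa_rows: "Dblock D \<kappa> (proj \<kappa> v) = proj \<kappa> ?z \<longleftrightarrow> proj \<kappa> w = proj \<kappa> (C x + D ?u)"
    by (auto simp: Dblock_def proj_simps algebra_simps)
  have "?u = solved_output C x w \<longleftrightarrow> proj \<kappa> v = Dinv D \<kappa> ?z"
    unfolding eq_commute[of ?u] eq_merge_on_iff by (auto simp: solved_output_def proj_simps)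
  also have "\<dots> \<longleftrightarrow> Dblock D \<kappa> (proj \<kappa> v) = proj \<kappa> ?z"
    by (rule eq_Dinv_iff[OF proj_proj])
  finally show ?thesis
    using kappa_rows by simp
qed

text \<open>In the following, v and w are argument and output of the conjugate oracles.\<close>

lemma conj_output_eq_iff:
  "merge_on \<kappa> w v = C x + D (merge_on \<kappa> v w) \<longleftrightarrow> v = conjC C D \<kappa> x + conjD D \<kappa> w"
proof -
  let ?u = "merge_on \<kappa> v w" and ?s = "solved_output C x w"
  have "proj (- \<kappa>) ?s = proj (- \<kappa>) w"
    by (simp add: solved_output_def proj_simps)
  then have u_eq_s: "?u = ?s \<longleftrightarrow> proj \<kappa> v = proj \<kappa> ?s"
    using eq_merge_on_iff[of ?s \<kappa> v w] by metis
  have "merge_on \<kappa> w v = C x + D ?u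
      \<longleftrightarrow> proj \<kappa> w = proj \<kappa> (C x + D ?u) \<and> proj (- \<kappa>) v = proj (- \<kappa>) (C x + D ?u)"
    using vec_eq_iff_proj[of "merge_on \<kappa> w v" "C x + D ?u" \<kappa>] by (simp only: proj_merge_on)
  also have "\<dots> \<longleftrightarrow> proj \<kappa> v = proj \<kappa> ?s \<and> proj (- \<kappa>) v = proj (- \<kappa>) (C x + D ?s)"
    using eq_solved_output_iff[of v w C x] u_eq_s by auto
  also have "\<dots> \<longleftrightarrow> v = conjC C D \<kappa> x + conjD D \<kappa> w"
    by (simp add: conjC_add_conjD eq_merge_on_iff)
  finally show ?thesis .
qed

lemma conj_state_eq:
  assumes "linear B" and "merge_on \<kappa> w v = C x + D (merge_on \<kappa> v w)"
  shows "conjA A B C D \<kappa> x + conjB B D \<kappa> w = A x + B (merge_on \<kappa> v w)"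
proof -
  have "merge_on \<kappa> v w = solved_output C x w"
    unfolding eq_solved_output_iff using arg_cong[OF assms(2), of "proj \<kappa>"] by simp
  then show ?thesis
    by (simp add: conjA_add_conjB[OF assms(1)])
qed

end

lemma oraclesConj_iff:
  "w $ i \<in> oraclesConj \<kappa> f i (v $ i)
    \<longleftrightarrow> merge_on \<kappa> v w $ i \<in> oraclesA f i (merge_on \<kappa> w v $ i)"
  by (cases "i \<in> \<kappa>") (simp_all add: oraclesConj_def oraclesA_def subdiff_inv_def)

lemma is_fixed_point_conj_iff:
  assumes "linear B" "linear D" "Dblock_invertible D \<kappa>"
  shows "is_fixed_point (conjA A B C D \<kappa>) (conjB B D \<kappa>) (conjC C D \<kappa>) (conjD D \<kappa>)
      (oraclesConj \<kappa> f) v w x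
    \<longleftrightarrow> is_fixed_point A B C D (oraclesA f) (merge_on \<kappa> w v) (merge_on \<kappa> v w) x"
proof -
  note output_eq = conj_output_eq_iff[OF assms(2,3), of w v C x, symmetric]
  note state_eq = conj_state_eq[OF assms(2,3,1), of w v C x A]
  show ?thesis
    unfolding is_fixed_point_def oraclesConj_iff output_eq using state_eq by metis
qed

lemma is_trajectory_conj_iff:
  assumes "linear B" "linear D" "Dblock_invertible D \<kappa>"
  shows "is_trajectory (conjA A B C D \<kappa>) (conjB B D \<kappa>) (conjC C D \<kappa>) (conjD D \<kappa>)
      (oraclesConj \<kappa> f) x0 v w x
    \<longleftrightarrow> is_trajectory A B C D (oraclesA f) x0
      (\<lambda>k. merge_on \<kappa> (w k) (v k)) (\<lambda>k. merge_on \<kappa> (v k) (w k)) x"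
proof -
  note output_eq = conj_output_eq_iff[OF assms(2,3), of "w k" "v k" C "x k" for k, symmetric]
  note state_eq = conj_state_eq[OF assms(2,3,1), of "w k" "v k" C "x k" A for k]
  show ?thesis
    unfolding is_trajectory_def oraclesConj_iff output_eq using state_eq by metis
qed

theorem proposition8p3:
  fixes A :: "'x::euclidean_space \<Rightarrow> 'x"
    and B :: "('v::euclidean_space)^'n::finite \<Rightarrow> 'x"
    and C :: "'x \<Rightarrow> 'v^'n"
    and D :: "'v^'n \<Rightarrow> 'v^'n"
    and f :: "'n \<Rightarrow> 'v \<Rightarrow> real"
    and \<kappa> :: "'n set"
    and x0 xs :: 'x
    and ys us :: "'v^'n"
  assumes "linear A" "linear B" "linear C" "linear D"
    and "Dblock_invertible D \<kappa>"
    and "converges_to A B C D (oraclesA f) x0 ys us xs"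
  shows "converges_to (conjA A B C D \<kappa>) (conjB B D \<kappa>) (conjC C D \<kappa>) (conjD D \<kappa>)
           (oraclesConj \<kappa> f) x0
           (proj \<kappa> us + proj (- \<kappa>) ys) (proj \<kappa> ys + proj (- \<kappa>) us) xs"
  unfolding merge_on_def[symmetric] converges_to_def
proof (intro conjI allI impI)
  note fixed_point = is_fixed_point_conj_iff[OF assms(2,4,5)]
  note trajectory = is_trajectory_conj_iff[OF assms(2,4,5)]
  show "is_fixed_point (conjA A B C D \<kappa>) (conjB B D \<kappa>) (conjC C D \<kappa>) (conjD D \<kappa>)
      (oraclesConj \<kappa> f) (merge_on \<kappa> us ys) (merge_on \<kappa> ys us) xs"
    using assms(6) by (simp add: fixed_point converges_to_def)
  fix v w x
  assume "is_trajectory (conjA A B C D \<kappa>) (conjB B D \<kappa>) (conjC C D \<kappa>) (conjD D \<kappa>)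
      (oraclesConj \<kappa> f) x0 v w x"
  then have lim: "(\<lambda>k. merge_on \<kappa> (w k) (v k)) \<longlonglongrightarrow> ys"
      "(\<lambda>k. merge_on \<kappa> (v k) (w k)) \<longlonglongrightarrow> us" "x \<longlonglongrightarrow> xs"
    using assms(6) by (simp_all add: trajectory converges_to_def)
  show "x \<longlonglongrightarrow> xs" by (fact lim(3))
  show "v \<longlonglongrightarrow> merge_on \<kappa> us ys" "w \<longlonglongrightarrow> merge_on \<kappa> ys us"
    using tendsto_merge_on[OF lim(2,1), of \<kappa>] tendsto_merge_on[OF lim(1,2), of \<kappa>] by simp_all
qed

end
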